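(* Let $f:\mathbb{Z}\to[0,\infty)$ be a non-negative function of bounded variation. Then: (i) if $n$ is a local maximum of $M_Lf$, then $M_Lf(n)=f(n)$; (ii) if $n$ is a local maximum of $M_Rf$, then $M_Rf(n)=f(n)$; (iii) if $n$ is a local maximum of $\widetilde{M}f$, then $\widetilde{M}f(n)=f(n)$.
   Context: Let $\mathbb{Z}^+=\{0,1,2,\dots\}$. For $f:\mathbb{Z}\to[0,\infty)$ define the left and right maximal operators $$M_Lf(n)=\sup_{r\in\mathbb{Z}^+}\frac{1}{r+\frac12}\Big\{\tfrac12 f(n)+\sum_{k=-r}^{-1}f(n+k)\Big\},\qquad M_Rf(n)=\sup_{s\in\mathbb{Z}^+}\frac{1}{s+\frac12}\Big\{\tfrac12 f(n)+\sum_{k=1}^{s}f(n+k)\Big\},$$ and the non-centered maximal operator $\widetilde{M}f(n)=\sup_{r,s\in\mathbb{Z}^+}\frac{1}{r+s+1}\sum_{k=-r}^{s}|f(n+k)|$. A function of bounded variation means $\sum_{n\in\mathbb{Z}}|f(n+1)-f(n)|<\infty$. A point $n\in\mathbb{Z}$ is a local maximum of a function $g:\mathbb{Z}\to\mathbb{R}$ if $g(n-1)\le g(n)$ and $g(n)>g(n+1)$. *)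

theory Defs
  imports "HOL-Analysis.Analysis"
begin

definition max_left :: "(int \<Rightarrow> real) \<Rightarrow> int \<Rightarrow> real" where
  "max_left f n = (SUP r::nat. (1 / (real r + 1/2)) *
      (f n / 2 + (\<Sum>k\<in>{- int r..-1}. f (n + k))))"

definition max_right :: "(int \<Rightarrow> real) \<Rightarrow> int \<Rightarrow> real" where
  "max_right f n = (SUP s::nat. (1 / (real s + 1/2)) *
      (f n / 2 + (\<Sum>k\<in>{1..int s}. f (n + k))))"

definition Mtilde :: "(int \<Rightarrow> real) \<Rightarrow> int \<Rightarrow> real" where
  "Mtilde f n = (SUP (r, s) \<in> (UNIV :: (nat \<times> nat) set).
      (1 / (real r + real s + 1)) * (\<Sum>k\<in>{- int r..int s}. \<bar>f (n + k)\<bar>))"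

definition bounded_variation :: "(int \<Rightarrow> real) \<Rightarrow> bool" where
  "bounded_variation f \<longleftrightarrow> (\<lambda>n. \<bar>f (n + 1) - f n\<bar>) summable_on (UNIV :: int set)"

definition local_max :: "(int \<Rightarrow> real) \<Rightarrow> int \<Rightarrow> bool" where
  "local_max g n \<longleftrightarrow> g (n - 1) \<le> g n \<and> g n > g (n + 1)"

end

theory Submission
  imports Defs
begin

text \<open>
  Bounded variation makes \<open>f\<close> bounded, so each maximal function is a finite supremum of
  averages.  Suppose \<open>S = Mf(n) > f(n)\<close> at a local maximum with neighbour values
  \<open>X \<le> S\<close> and \<open>Y \<le> S\<close>, one of them strict.  Every average at \<open>n\<close> other than the trivial
  one is controlled in two ways: removing the point \<open>n\<close> gives an average at \<open>n - 1\<close>, and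
  adding the point \<open>n + 1\<close> gives an average at \<open>n + 1\<close>.  For a window of weight \<open>p\<close> this
  yields \<open>A \<le> S - d/p\<close> and \<open>A \<le> Y + e/p\<close> with \<open>d > 0\<close>; short windows are handled by the
  first bound, long ones by the second, so all averages stay uniformly below \<open>S\<close>.
\<close>

lemma sum_int_telescope:
  fixes f :: "int \<Rightarrow> 'a::ab_group_add"
  assumes "a \<le> b"
  shows "(\<Sum>k\<in>{a..<b}. f (k + 1) - f k) = f b - f a"
  using assms
proof (induction b rule: int_ge_induct)
  case (step b)
  then have "{a..<b + 1} = insert b {a..<b}" by auto
  with step show ?case by simp
qed simp

lemma sum_int_interval_shift:
  "(\<Sum>k\<in>{a..b}. g (n + k)) = (\<Sum>j\<in>{n + a..n + b::int}. g j)"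
  by (rule sum.reindex_bij_witness[of _ "\<lambda>j. j - n" "\<lambda>k. n + k"]) auto

lemma sum_int_interval_le:
  fixes g :: "int \<Rightarrow> real"
  assumes "\<And>j. g j \<le> B"
  shows "(\<Sum>j\<in>{a..b}. g j) \<le> real (nat (b - a + 1)) * B"
  using sum_bounded_above[of "{a..b}" g B] assms by simp

lemma bounded_variation_imp_bounded:
  assumes "bounded_variation f"
  obtains B where "\<And>n. \<bar>f n\<bar> \<le> B"
proof -
  define g where "g n = \<bar>f (n + 1) - f n\<bar>" for n
  have "g summable_on UNIV"
    using assms unfolding bounded_variation_def g_def by simp
  then have sum_le: "sum g F \<le> infsum g UNIV" if "finite F" for F
    by (rule finite_sum_le_infsum) (auto simp: g_def that)
  have diff_le: "\<bar>f b - f a\<bar> \<le> infsum g UNIV" if "a \<le> b" for a b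
  proof -
    have "\<bar>f b - f a\<bar> = \<bar>\<Sum>k\<in>{a..<b}. f (k + 1) - f k\<bar>"
      using sum_int_telescope[OF that, of f] by simp
    also have "\<dots> \<le> sum g {a..<b}"
      unfolding g_def by (rule sum_abs)
    also have "\<dots> \<le> infsum g UNIV"
      by (rule sum_le) simp
    finally show ?thesis .
  qed
  have "\<bar>f n\<bar> \<le> \<bar>f 0\<bar> + infsum g UNIV" for n
    using diff_le[of 0 n] diff_le[of n 0] by (cases "0 \<le> n") auto
  then show thesis by (rule that)
qed

lemma gap_from_two_estimates:
  fixes S X Y u w :: real
  assumes "X \<le> S" "Y \<le> S" "u < S" "X < S \<or> Y < S"
  shows "\<exists>V<S. \<forall>p A. p \<ge> 1 \<longrightarrow> p * A \<le> (p - 1) * X + u \<longrightarrow> p * A \<le> (p + 1) * Y - w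
    \<longrightarrow> A \<le> V"
proof (cases "X < S")
  case True
  show ?thesis
  proof (intro exI[of _ "max X u"] conjI allI impI)
    show "max X u < S" using True assms by simp
    fix p A :: real
    assume p: "p \<ge> 1" and h: "p * A \<le> (p - 1) * X + u"
    have "(p - 1) * X \<le> (p - 1) * max X u" using p by (intro mult_left_mono) auto
    then have "p * A \<le> p * max X u" using h by (simp add: algebra_simps)
    then show "A \<le> max X u" using p by simp
  qed
next
  case False
  then have Y: "Y < S" using assms by simp
  show ?thesis
  proof (cases "Y - w \<le> 0")
    case True
    show ?thesis
    proof (intro exI[of _ Y] conjI allI impI)
      fix p A :: real
      assume p: "p \<ge> 1" and h: "p * A \<le> (p + 1) * Y - w"
      moreover have "(p + 1) * Y - w \<le> p * Y" using True by (simp add: algebra_simps)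
      ultimately have "p * A \<le> p * Y" by linarith
      then show "A \<le> Y" using p by simp
    qed fact
  next
    case False
    define d e where "d = S - u" and "e = Y - w"
    have d: "d > 0" and e: "e > 0" using assms False by (auto simp: d_def e_def)
    \<comment> \<open>The two estimates give \<open>A \<le> S - d/p\<close> and \<open>A \<le> Y + e/p\<close>; the convex
      combination with weights \<open>e\<close> and \<open>d\<close> eliminates \<open>p\<close>.\<close>
    show ?thesis
    proof (intro exI[of _ "(d * Y + e * S) / (d + e)"] conjI allI impI)
      have "d * Y + e * S < (d + e) * S" using d Y by (simp add: algebra_simps)
      then show "(d * Y + e * S) / (d + e) < S" using d e by (simp add: field_simps)
      fix p A :: real
      assume p: "p \<ge> 1" and h1: "p * A \<le> (p - 1) * X + u" and h2: "p * A \<le> (p + 1) * Y - w"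
      have "(p - 1) * X \<le> (p - 1) * S" using p assms by (intro mult_left_mono) auto
      then have "e * (p * A) \<le> e * (p * S - d)"
        using h1 e by (intro mult_left_mono) (auto simp: d_def algebra_simps)
      moreover have "d * (p * A) \<le> d * (p * Y + e)"
        using h2 d by (intro mult_left_mono) (auto simp: e_def algebra_simps)
      ultimately have "p * (A * (d + e)) \<le> p * (d * Y + e * S)" by (simp add: algebra_simps)
      then have "A * (d + e) \<le> d * Y + e * S" using p by simp
      then show "A \<le> (d * Y + e * S) / (d + e)" using d e by (simp add: field_simps)
    qed
  qed
qed

definition left_avg :: "(int \<Rightarrow> real) \<Rightarrow> int \<Rightarrow> nat \<Rightarrow> real" where
  "left_avg f n r = (f n / 2 + (\<Sum>j\<in>{n - int r..n - 1}. f j)) / (real r + 1/2)"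

lemma max_left_eq_SUP_left_avg: "max_left f n = (SUP r. left_avg f n r)"
  unfolding max_left_def left_avg_def by (simp add: sum_int_interval_shift)

lemma left_avg_0 [simp]: "left_avg f n 0 = f n"
  unfolding left_avg_def by simp

lemma left_avg_le:
  assumes "\<And>m. f m \<le> B"
  shows "left_avg f n r \<le> B"
proof -
  have "(\<Sum>j\<in>{n - int r..n - 1}. f j) \<le> real r * B"
    using sum_int_interval_le[of f B "n - int r" "n - 1"] assms by simp
  then have "f n / 2 + (\<Sum>j\<in>{n - int r..n - 1}. f j) \<le> (real r + 1/2) * B"
    using assms[of n] by (simp add: algebra_simps)
  then show ?thesis unfolding left_avg_def by (simp add: divide_le_eq mult.commute)
qed

lemma left_avg_le_max_left:
  assumes "\<And>m. f m \<le> B"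
  shows "left_avg f n r \<le> max_left f n"
  unfolding max_left_eq_SUP_left_avg
  by (rule cSUP_upper) (auto intro!: bdd_aboveI[of _ B] left_avg_le assms)

lemma left_avg_Suc:
  "(real r + 3/2) * left_avg f n (Suc r)
    = (f (n - 1) + f n) / 2 + (real r + 1/2) * left_avg f (n - 1) r"
proof -
  have "{n - int (Suc r)..n - 1} = insert (n - 1) {n - 1 - int r..n - 2}" by auto
  then show ?thesis unfolding left_avg_def by (simp add: field_simps)
qed

lemma left_avg_succ_Suc:
  "(real r + 3/2) * left_avg f (n + 1) (Suc r)
    = (real r + 1/2) * left_avg f n r + (f n + f (n + 1)) / 2"
proof -
  have "{n + 1 - int (Suc r)..n} = insert n {n - int r..n - 1}" by auto
  then show ?thesis unfolding left_avg_def by (simp add: field_simps)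
qed

lemma max_left_eq_at_peak:
  assumes bounded: "\<And>m. f m \<le> B"
    and left: "max_left f (n - 1) \<le> max_left f n"
    and right: "max_left f (n + 1) \<le> max_left f n"
    and strict: "max_left f (n - 1) < max_left f n \<or> max_left f (n + 1) < max_left f n"
  shows "max_left f n = f n"
proof (rule ccontr)
  define S X Y where "S = max_left f n" and "X = max_left f (n - 1)" and "Y = max_left f (n + 1)"
  have le_max: "left_avg f m r \<le> max_left f m" for m r
    using left_avg_le_max_left[OF bounded] .
  assume "max_left f n \<noteq> f n"
  moreover have "f n \<le> S" using le_max[of n 0] by (simp add: S_def)
  ultimately have fn: "f n < S" by (simp add: S_def)
  moreover have "f (n - 1) \<le> X" using le_max[of "n - 1" 0] by (simp add: X_def)
  ultimately obtain V where "V < S" and V: "\<And>p A. p \<ge> 1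
      \<Longrightarrow> p * A \<le> (p - 1) * X + (f (n - 1) + f n) / 2
      \<Longrightarrow> p * A \<le> (p + 1) * Y - (f n + f (n + 1)) / 2 \<Longrightarrow> A \<le> V"
    using gap_from_two_estimates[of X S Y "(f (n - 1) + f n) / 2" "(f n + f (n + 1)) / 2"]
      left right strict by (auto simp: S_def X_def Y_def)
  have "left_avg f n (Suc r) \<le> V" for r
  proof (rule V)
    have "(real r + 1/2) * left_avg f (n - 1) r \<le> (real r + 1/2) * X"
      using le_max[of "n - 1" r] by (intro mult_left_mono) (auto simp: X_def)
    then show "(real r + 3/2) * left_avg f n (Suc r)
        \<le> (real r + 3/2 - 1) * X + (f (n - 1) + f n) / 2"
      using left_avg_Suc[of r f n] by (simp add: algebra_simps)
    have "(real r + 5/2) * left_avg f (n + 1) (Suc (Suc r)) \<le> (real r + 5/2) * Y"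
      using le_max[of "n + 1" "Suc (Suc r)"] by (intro mult_left_mono) (auto simp: Y_def)
    then show "(real r + 3/2) * left_avg f n (Suc r)
        \<le> (real r + 3/2 + 1) * Y - (f n + f (n + 1)) / 2"
      using left_avg_succ_Suc[of "Suc r" f n] by (simp add: algebra_simps)
  qed simp
  then have "left_avg f n r \<le> max V (f n)" for r
    by (cases r) (auto intro: max.coboundedI1)
  then have "S \<le> max V (f n)"
    unfolding S_def max_left_eq_SUP_left_avg by (intro cSUP_least) auto
  with \<open>V < S\<close> fn show False by simp
qed

text \<open>\<open>local_max\<close> is not symmetric under reflection, which is why \<open>max_left_eq_at_peak\<close>
  assumes only that one of the two neighbours is strictly smaller.\<close>

lemma max_right_eq_max_left_reflect: "max_right f n = max_left (\<lambda>m. f (- m)) (- n)"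
proof -
  have "(\<Sum>k\<in>{1..int s}. f (n + k)) = (\<Sum>k\<in>{- int s..-1}. f (- (- n + k)))" for s
    by (rule sum.reindex_bij_witness[of _ uminus uminus]) (auto simp: add.commute)
  then show ?thesis unfolding max_right_def max_left_def by simp
qed

definition window_avg :: "(int \<Rightarrow> real) \<Rightarrow> int \<Rightarrow> nat \<Rightarrow> nat \<Rightarrow> real" where
  "window_avg f n r s = (\<Sum>j\<in>{n - int r..n + int s}. f j) / (real r + real s + 1)"

lemma Mtilde_eq_SUP_window_avg:
  assumes "\<And>m. f m \<ge> 0"
  shows "Mtilde f n = (SUP (r, s) \<in> UNIV. window_avg f n r s)"
  unfolding Mtilde_def window_avg_def
  by (simp add: sum_int_interval_shift abs_of_nonneg assms)

lemma window_avg_0_0 [simp]: "window_avg f n 0 0 = f n"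
  unfolding window_avg_def by simp

lemma window_avg_le:
  assumes "\<And>m. f m \<le> B"
  shows "window_avg f n r s \<le> B"
proof -
  have "(\<Sum>j\<in>{n - int r..n + int s}. f j) \<le> (real r + real s + 1) * B"
    using sum_int_interval_le[of f B "n - int r" "n + int s"] assms by (simp add: add.commute)
  then show ?thesis unfolding window_avg_def by (simp add: divide_le_eq mult.commute)
qed

lemma window_avg_le_Mtilde:
  assumes "\<And>m. f m \<ge> 0" "\<And>m. f m \<le> B"
  shows "window_avg f n r s \<le> Mtilde f n"
proof -
  have "bdd_above (range (\<lambda>(r, s). window_avg f n r s))"
    by (rule bdd_aboveI[of _ B]) (auto intro: window_avg_le assms)
  then have "(\<lambda>(r, s). window_avg f n r s) (r, s) \<le> (SUP (r, s) \<in> UNIV. window_avg f n r s)"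
    by (rule cSUP_upper[OF UNIV_I])
  then show ?thesis using Mtilde_eq_SUP_window_avg[OF assms(1)] by simp
qed

lemma window_avg_Suc_right: "window_avg f n r (Suc s) = window_avg f (n + 1) (Suc r) s"
  unfolding window_avg_def by (simp add: algebra_simps)

lemma window_avg_Suc_left:
  "(real r + 2) * window_avg f n (Suc r) 0 = (real r + 1) * window_avg f (n - 1) r 0 + f n"
proof -
  have "{n - int (Suc r)..n} = insert n {n - 1 - int r..n - 1}" by auto
  then show ?thesis unfolding window_avg_def by (simp add: field_simps)
qed

lemma Mtilde_eq_at_peak:
  assumes nonneg: "\<And>m. f m \<ge> 0" and bounded: "\<And>m. f m \<le> B"
    and left: "Mtilde f (n - 1) \<le> Mtilde f n"
    and right: "Mtilde f (n + 1) < Mtilde f n"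
  shows "Mtilde f n = f n"
proof (rule ccontr)
  define S X Y where "S = Mtilde f n" and "X = Mtilde f (n - 1)" and "Y = Mtilde f (n + 1)"
  have le_max: "window_avg f m r s \<le> Mtilde f m" for m r s
    using window_avg_le_Mtilde[OF nonneg bounded] .
  assume "Mtilde f n \<noteq> f n"
  moreover have "f n \<le> S" using le_max[of n 0 0] by (simp add: S_def)
  ultimately have "f n < S" by (simp add: S_def)
  then obtain V where "V < S" and V: "\<And>p A. p \<ge> 1
      \<Longrightarrow> p * A \<le> (p - 1) * X + f n \<Longrightarrow> p * A \<le> (p + 1) * Y - f (n + 1) \<Longrightarrow> A \<le> V"
    using gap_from_two_estimates[of X S Y "f n" "f (n + 1)"] left right
    by (auto simp: S_def X_def Y_def)
  have "window_avg f n r 0 \<le> V" for r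
  proof (rule V)
    show "(real r + 1) * window_avg f n r 0 \<le> (real r + 1 - 1) * X + f n"
    proof (cases r)
      case (Suc q)
      have "(real q + 1) * window_avg f (n - 1) q 0 \<le> (real q + 1) * X"
        using le_max[of "n - 1" q 0] by (intro mult_left_mono) (auto simp: X_def)
      then show ?thesis
        using window_avg_Suc_left[of q f n] Suc by (simp add: algebra_simps)
    qed simp
    have "(real r + 2) * window_avg f (n + 1) (Suc r) 0 \<le> (real r + 2) * Y"
      using le_max[of "n + 1" "Suc r" 0] by (intro mult_left_mono) (auto simp: Y_def)
    then show "(real r + 1) * window_avg f n r 0 \<le> (real r + 1 + 1) * Y - f (n + 1)"
      using window_avg_Suc_left[of r f "n + 1"] by (simp add: algebra_simps)
  qed simp
  moreover have "window_avg f n r (Suc s) \<le> Y" for r s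
    using le_max[of "n + 1" "Suc r" s] by (simp add: window_avg_Suc_right Y_def)
  ultimately have "window_avg f n r s \<le> max V Y" for r s
    by (cases s) (auto intro: max.coboundedI1 max.coboundedI2)
  then have "S \<le> max V Y"
    unfolding S_def Mtilde_eq_SUP_window_avg[OF nonneg] by (intro cSUP_least) auto
  with \<open>V < S\<close> right show False by (simp add: S_def Y_def)
qed

theorem lemma1:
  fixes f :: "int \<Rightarrow> real"
  assumes nonneg: "\<And>n. f n \<ge> 0"
    and bv: "bounded_variation f"
  shows "(\<forall>n. local_max (max_left f) n \<longrightarrow> max_left f n = f n)
    \<and> (\<forall>n. local_max (max_right f) n \<longrightarrow> max_right f n = f n)
    \<and> (\<forall>n. local_max (Mtilde f) n \<longrightarrow> Mtilde f n = f n)"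
proof -
  obtain B where "\<And>n. \<bar>f n\<bar> \<le> B"
    using bounded_variation_imp_bounded[OF bv] by blast
  then have bounded: "\<And>n. f n \<le> B"
    by (meson abs_ge_self order.trans)
  have left: "max_left f n = f n" if "local_max (max_left f) n" for n
    using that max_left_eq_at_peak[of f B n] bounded unfolding local_max_def by auto
  have right: "max_right f n = f n" if "local_max (max_right f) n" for n
  proof -
    let ?g = "\<lambda>m. f (- m)"
    have "- n - 1 = - (n + 1)" "- n + 1 = - (n - 1)" by simp_all
    then have "max_left ?g (- n - 1) < max_left ?g (- n)" "max_left ?g (- n + 1) \<le> max_left ?g (- n)"
      using that unfolding local_max_def max_right_eq_max_left_reflect by metis+
    then show ?thesis
      using max_left_eq_at_peak[of ?g B "- n"] bounded
      by (simp add: max_right_eq_max_left_reflect)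
  qed
  have window: "Mtilde f n = f n" if "local_max (Mtilde f) n" for n
    using that Mtilde_eq_at_peak[OF nonneg bounded] unfolding local_max_def by auto
  show ?thesis using left right window by blast
qed

end
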